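(* There is an absolute constant $c>0$ such that for all real $\mu,\mu^*>0$ with $\mu\in[c,\tfrac43\mu^*]$, the function $$G(\mu,\mu^* )=\mathbb E_{x\sim\mathcal N(\mu^*,1)}\Big[-\tfrac12\tanh''(\mu x)\mu^2x+\tanh'(\mu x)\mu x^2-\tanh'(\mu x)\mu\Big]$$ satisfies $G(\mu,\mu^* )\le0.01\,|\mu-\mu^*|$. *)

theory Defs
  imports "HOL-Probability.Probability"
begin

definition G_integrand :: "real \<Rightarrow> real \<Rightarrow> real" where
  "G_integrand \<mu> x =
     - (1/2) * (deriv (deriv tanh)) (\<mu> * x) * \<mu>^2 * x
     + (deriv tanh) (\<mu> * x) * \<mu> * x^2
     - (deriv tanh) (\<mu> * x) * \<mu>"

definition G :: "real \<Rightarrow> real \<Rightarrow> real" where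
  "G \<mu> \<mu>s = (\<integral>x. G_integrand \<mu> x \<partial>(density lborel (normal_density \<mu>s 1)))"

end

theory Submission
  imports Defs "HOL-Real_Asymp.Real_Asymp"
begin

text \<open>
  Write \<open>\<phi>\<close> for the standard normal density and \<open>s(x) = 1 - tanh (\<mu> x)^2\<close>.
  The density of \<open>N(b, 1)\<close> is \<open>exp (- b^2/2) exp (b x) \<phi>(x)\<close> and the integrand of
  \<open>G(\<mu>, b)\<close> is even in \<open>x\<close>, so \<open>G(\<mu>, b) = exp (- b^2/2) \<integral> cosh (b x) G_integrand \<mu> x \<phi>(x) dx\<close>.
  Integrating the derivative of \<open>\<mu> x cosh (b x) s(x) \<phi>(x)\<close> over the line turns this into
  \<open>\<mu>/2 exp (- b^2/2) \<integral> G_weight b x s(x) \<phi>(x) dx\<close>. For \<open>b = \<mu>\<close> the integrand of \<open>G\<close>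
  itself equals \<open>\<mu> G_weight \<mu> x s(x) / cosh (\<mu> x)\<close>, and comparing the two expressions shows
  that the integral of \<open>G_weight \<mu> x s(x) \<phi>(x)\<close> vanishes. Hence
  \<open>G(\<mu>, b) = \<mu>/2 exp (- b^2/2) \<integral> (G_weight b x - G_weight \<mu> x) s(x) \<phi>(x) dx\<close>.

  The \<open>t\<close>-derivative \<open>x^2 (x sinh (t x) + t cosh (t x))\<close> of \<open>G_weight t x\<close> is nonnegative for
  \<open>t \<ge> 0\<close>, so \<open>G(\<mu>, b) \<le> 0\<close> for \<open>b \<le> \<mu>\<close>. For \<open>b > \<mu>\<close> the mean value theorem together
  with \<open>s(x) \<le> 4 exp (-2 \<mu> |x|)\<close> bounds the integrand by a multiple of \<open>exp ((b - 2\<mu> + 2) |x|)\<close>,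
  whose Gaussian integral is at most \<open>2 exp ((b - 2\<mu> + 2)^2 / 2)\<close>. The factor \<open>exp (- b^2/2)\<close>
  then makes \<open>G(\<mu>, b) \<le> 8 \<mu> (1 + b) exp (-2 (\<mu> - 1)(b - \<mu> + 1)) (b - \<mu>)\<close>, which is below
  \<open>(b - \<mu>) / 100\<close> for all large \<open>\<mu>\<close>.
\<close>

lemma deriv_tanh_real: "deriv tanh = (\<lambda>x::real. 1 - tanh x ^ 2)"
  by (rule ext, rule DERIV_imp_deriv) (auto intro!: derivative_eq_intros)

lemma deriv_deriv_tanh_real: "deriv (deriv tanh) = (\<lambda>x::real. -2 * tanh x * (1 - tanh x ^ 2))"
  unfolding deriv_tanh_real
  by (rule ext, rule DERIV_imp_deriv)
     (auto intro!: derivative_eq_intros simp: power2_eq_square algebra_simps)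

lemma one_minus_tanh_square_real: "1 - tanh (y::real) ^ 2 = 1 / cosh y ^ 2"
proof -
  have "1 - tanh y ^ 2 = (cosh y ^ 2 - sinh y ^ 2) / cosh y ^ 2"
    by (simp add: tanh_def power_divide field_simps)
  then show ?thesis
    by (simp add: hyperbolic_pythagoras)
qed

lemma G_integrand_eq:
  "G_integrand \<mu> x = \<mu> * (\<mu> * x * tanh (\<mu> * x) + x^2 - 1) * (1 - tanh (\<mu> * x)^2)"
  \<comment> \<open>unfold the second derivative first, before \<open>deriv_tanh_real\<close> rewrites inside it\<close>
  unfolding G_integrand_def deriv_deriv_tanh_real
  unfolding deriv_tanh_real
  by (simp add: algebra_simps power2_eq_square)

lemma G_integrand_minus: "G_integrand \<mu> (- x) = G_integrand \<mu> x"
  by (simp add: G_integrand_eq)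

section \<open>Continuous functions of exponential growth\<close>

definition exp_bounded :: "(real \<Rightarrow> real) \<Rightarrow> bool" where
  "exp_bounded f \<longleftrightarrow> continuous_on UNIV f \<and> (\<exists>C K. \<forall>x. \<bar>f x\<bar> \<le> C * exp (K * \<bar>x\<bar>))"

lemma exp_boundedI:
  assumes "continuous_on UNIV f" and "\<And>x. \<bar>f x\<bar> \<le> C * exp (K * \<bar>x\<bar>)"
  shows "exp_bounded f"
  unfolding exp_bounded_def using assms by blast

lemma exp_boundedE:
  assumes "exp_bounded f"
  obtains C K where "continuous_on UNIV f" and "\<And>x. \<bar>f x\<bar> \<le> C * exp (K * \<bar>x\<bar>)"
  using assms unfolding exp_bounded_def by blast

lemma exp_bounded_const: "exp_bounded (\<lambda>x. c)"
  by (rule exp_boundedI[where C="\<bar>c\<bar>" and K=0]) auto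

lemma exp_bounded_ident: "exp_bounded (\<lambda>x. x)"
proof (rule exp_boundedI[where C=1 and K=1])
  fix x :: real
  have "\<bar>x\<bar> \<le> exp \<bar>x\<bar>"
    using exp_ge_add_one_self[of "\<bar>x\<bar>"] by linarith
  then show "\<bar>x\<bar> \<le> 1 * exp (1 * \<bar>x\<bar>)"
    by simp
qed (rule continuous_on_id)

lemma exp_bounded_exp_linear: "exp_bounded (\<lambda>x. exp (b * x))"
  by (rule exp_boundedI[where C=1 and K="\<bar>b\<bar>"]) (auto intro!: continuous_intros simp flip: abs_mult)

lemma exp_bounded_exp_abs: "exp_bounded (\<lambda>x. exp (k * \<bar>x\<bar>))"
  by (rule exp_boundedI[where C=1 and K=k]) (auto intro!: continuous_intros)

lemma exp_bounded_add:
  assumes "exp_bounded f" and "exp_bounded g"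
  shows "exp_bounded (\<lambda>x. f x + g x)"
proof -
  obtain C K C' K' where cont: "continuous_on UNIV f" "continuous_on UNIV g"
    and f: "\<And>x. \<bar>f x\<bar> \<le> C * exp (K * \<bar>x\<bar>)" and g: "\<And>x. \<bar>g x\<bar> \<le> C' * exp (K' * \<bar>x\<bar>)"
    using assms by (metis exp_boundedE)
  show ?thesis
  proof (rule exp_boundedI[where C="\<bar>C\<bar> + \<bar>C'\<bar>" and K="max K K'"])
    fix x
    have "C * exp (K * \<bar>x\<bar>) \<le> \<bar>C\<bar> * exp (max K K' * \<bar>x\<bar>)"
      "C' * exp (K' * \<bar>x\<bar>) \<le> \<bar>C'\<bar> * exp (max K K' * \<bar>x\<bar>)"
      by (intro mult_mono; simp add: mult_right_mono)+
    then show "\<bar>f x + g x\<bar> \<le> (\<bar>C\<bar> + \<bar>C'\<bar>) * exp (max K K' * \<bar>x\<bar>)"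
      unfolding distrib_right using f[of x] g[of x] abs_triangle_ineq[of "f x" "g x"] by linarith
  qed (use cont in \<open>intro continuous_intros\<close>)
qed

lemma exp_bounded_mult:
  assumes "exp_bounded f" and "exp_bounded g"
  shows "exp_bounded (\<lambda>x. f x * g x)"
proof -
  obtain C K C' K' where cont: "continuous_on UNIV f" "continuous_on UNIV g"
    and f: "\<And>x. \<bar>f x\<bar> \<le> C * exp (K * \<bar>x\<bar>)" and g: "\<And>x. \<bar>g x\<bar> \<le> C' * exp (K' * \<bar>x\<bar>)"
    using assms by (metis exp_boundedE)
  show ?thesis
  proof (rule exp_boundedI[where C="C * C'" and K="K + K'"])
    fix x
    have "\<bar>f x * g x\<bar> \<le> C * exp (K * \<bar>x\<bar>) * (C' * exp (K' * \<bar>x\<bar>))"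
      unfolding abs_mult by (rule mult_mono[OF f g]) (use f[of x] in \<open>auto intro: order_trans\<close>)
    also have "\<dots> = C * C' * exp ((K + K') * \<bar>x\<bar>)"
      by (simp add: distrib_right exp_add)
    finally show "\<bar>f x * g x\<bar> \<le> C * C' * exp ((K + K') * \<bar>x\<bar>)" .
  qed (use cont in \<open>intro continuous_intros\<close>)
qed

lemma exp_bounded_diff:
  assumes "exp_bounded f" and "exp_bounded g"
  shows "exp_bounded (\<lambda>x. f x - g x)"
  using exp_bounded_add[OF assms(1) exp_bounded_mult[OF exp_bounded_const[of "-1"] assms(2)]]
  by simp

lemma exp_bounded_power: "exp_bounded f \<Longrightarrow> exp_bounded (\<lambda>x. f x ^ n)"
  by (induction n) (simp_all add: exp_bounded_const exp_bounded_mult)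

lemma exp_bounded_cosh: "exp_bounded (\<lambda>x. cosh (b * x))"
  using exp_bounded_mult[OF exp_bounded_const[of "1/2"]
      exp_bounded_add[OF exp_bounded_exp_linear[of b] exp_bounded_exp_linear[of "-b"]]]
  by (simp add: cosh_def)

lemma exp_bounded_sinh: "exp_bounded (\<lambda>x. sinh (b * x))"
  using exp_bounded_mult[OF exp_bounded_const[of "1/2"]
      exp_bounded_diff[OF exp_bounded_exp_linear[of b] exp_bounded_exp_linear[of "-b"]]]
  by (simp add: sinh_def)

lemma exp_bounded_tanh: "exp_bounded (\<lambda>x. tanh (b * x))"
proof (rule exp_boundedI[where C=1 and K=0])
  show "\<bar>tanh (b * x)\<bar> \<le> 1 * exp (0 * \<bar>x\<bar>)" for x
    using tanh_real_bounds[of "b * x"] by auto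
qed (auto intro!: continuous_intros)

lemmas exp_bounded_intros =
  exp_bounded_const exp_bounded_ident exp_bounded_exp_linear exp_bounded_cosh exp_bounded_sinh
  exp_bounded_tanh exp_bounded_add exp_bounded_diff exp_bounded_mult exp_bounded_power

section \<open>Integrals against the Gaussian density\<close>

lemma normal_density_shift:
  "normal_density b 1 x = exp (- (b^2) / 2) * exp (b * x) * std_normal_density x"
proof -
  have "- ((x - b)^2) / 2 = - (b^2) / 2 + b * x + - (x^2) / 2"
    by (simp add: power2_eq_square field_simps)
  then have "exp (- ((x - b)^2) / 2) = exp (- (b^2) / 2) * exp (b * x) * exp (- (x^2) / 2)"
    by (simp only: exp_add)
  then show ?thesis
    by (simp add: normal_density_def)
qed

lemma has_real_derivative_std_normal_density [THEN DERIV_chain2, derivative_intros]: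
  "(std_normal_density has_real_derivative - x * std_normal_density x) (at x)"
proof -
  have eq: "std_normal_density = (\<lambda>x. exp (- (x^2) / 2) / sqrt (2 * pi))"
    by (rule ext) (simp add: std_normal_density_def)
  have "((\<lambda>x. exp (- (x^2) / 2)) has_real_derivative exp (- (x^2) / 2) * (- x)) (at x)"
    by (rule derivative_eq_intros refl | simp)+
  from DERIV_cdivide[OF this, of "sqrt (2 * pi)"] show ?thesis
    unfolding eq by (simp add: algebra_simps)
qed

lemma exp_abs_mult_std_normal_density_le:
  "exp (k * \<bar>x\<bar>) * std_normal_density x
     \<le> exp (k^2 / 2) * (normal_density k 1 x + normal_density (- k) 1 x)"
proof -
  have "exp (k * \<bar>x\<bar>) \<le> exp (k * x) + exp (- k * x)"
    by (cases "x \<ge> 0") auto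
  then have "exp (k * \<bar>x\<bar>) * std_normal_density x
      \<le> (exp (k * x) + exp (- k * x)) * std_normal_density x"
    by (rule mult_right_mono) simp
  also have "\<dots> = exp (k^2 / 2) * (normal_density k 1 x + normal_density (- k) 1 x)"
    unfolding normal_density_shift[of k] normal_density_shift[of "- k"]
    by (simp add: algebra_simps flip: exp_add)
  finally show ?thesis .
qed

lemma integrable_exp_bounded_mult_std_normal:
  assumes "exp_bounded f"
  shows "integrable lborel (\<lambda>x. f x * std_normal_density x)"
proof -
  obtain C K where cont: "continuous_on UNIV f" and f: "\<And>x. \<bar>f x\<bar> \<le> C * exp (K * \<bar>x\<bar>)"
    using assms by (metis exp_boundedE)
  have "0 \<le> C"
    using f[of 0] by (simp add: zero_le_mult_iff)
  show ?thesis
  proof (rule Bochner_Integration.integrable_bound)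
    show "integrable lborel
        (\<lambda>x. C * (exp (K^2 / 2) * (normal_density K 1 x + normal_density (- K) 1 x)))"
      by simp
    show "(\<lambda>x. f x * std_normal_density x) \<in> borel_measurable lborel"
      using borel_measurable_continuous_onI[OF cont] by simp
    show "AE x in lborel. norm (f x * std_normal_density x)
        \<le> norm (C * (exp (K^2 / 2) * (normal_density K 1 x + normal_density (- K) 1 x)))"
    proof (rule AE_I2)
      fix x
      have "\<bar>f x\<bar> * std_normal_density x \<le> C * (exp (K * \<bar>x\<bar>) * std_normal_density x)"
        using mult_right_mono[OF f[of x] normal_density_nonneg] by (simp add: mult.assoc)
      also have "\<dots> \<le> C * (exp (K^2 / 2) * (normal_density K 1 x + normal_density (- K) 1 x))"
        using exp_abs_mult_std_normal_density_le \<open>0 \<le> C\<close> by (rule mult_left_mono)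
      finally show "norm (f x * std_normal_density x)
          \<le> norm (C * (exp (K^2 / 2) * (normal_density K 1 x + normal_density (- K) 1 x)))"
        using \<open>0 \<le> C\<close> by (simp add: abs_mult)
    qed
  qed
qed

lemma integral_exp_abs_mult_std_normal_le:
  "(\<integral>x. exp (k * \<bar>x\<bar>) * std_normal_density x \<partial>lborel) \<le> 2 * exp (k^2 / 2)"
proof -
  have "(\<integral>x. exp (k * \<bar>x\<bar>) * std_normal_density x \<partial>lborel)
      \<le> (\<integral>x. exp (k^2 / 2) * (normal_density k 1 x + normal_density (- k) 1 x) \<partial>lborel)"
    by (intro integral_mono integrable_exp_bounded_mult_std_normal exp_abs_mult_std_normal_density_le
        exp_bounded_exp_abs integrable_mult_right Bochner_Integration.integrable_add integrable_normal_density)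
       simp_all
  also have "\<dots> = 2 * exp (k^2 / 2)"
    by simp
  finally show ?thesis .
qed

lemma tendsto_exp_bounded_mult_std_normal:
  assumes "exp_bounded f"
  shows "((\<lambda>x. f x * std_normal_density x) \<longlongrightarrow> 0) at_top"
    and "((\<lambda>x. f x * std_normal_density x) \<longlongrightarrow> 0) at_bot"
proof -
  obtain C K where f: "\<And>x. \<bar>f x\<bar> \<le> C * exp (K * \<bar>x\<bar>)"
    using assms by (metis exp_boundedE)
  have bound: "norm (f x * std_normal_density x) \<le> C / sqrt (2 * pi) * exp (K * \<bar>x\<bar> - (x^2) / 2)" for x
  proof -
    have "norm (f x * std_normal_density x) \<le> C * exp (K * \<bar>x\<bar>) * std_normal_density x"
      using mult_right_mono[OF f[of x] normal_density_nonneg] by (simp add: abs_mult)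
    also have "\<dots> = C / sqrt (2 * pi) * (exp (K * \<bar>x\<bar>) * exp (- (x^2) / 2))"
      by (simp add: std_normal_density_def)
    also have "\<dots> = C / sqrt (2 * pi) * exp (K * \<bar>x\<bar> - (x^2) / 2)"
      by (simp flip: exp_add)
    finally show ?thesis .
  qed
  have lim: "((\<lambda>x. exp (K * \<bar>x\<bar> - (x^2) / 2)) \<longlongrightarrow> 0) at_top"
      "((\<lambda>x. exp (K * \<bar>x\<bar> - (x^2) / 2)) \<longlongrightarrow> 0) at_bot"
    by real_asymp+
  show "((\<lambda>x. f x * std_normal_density x) \<longlongrightarrow> 0) at_top"
    by (rule Lim_null_comparison[OF always_eventually[OF allI[OF bound]]
          tendsto_mult_right_zero[OF lim(1)]])
  show "((\<lambda>x. f x * std_normal_density x) \<longlongrightarrow> 0) at_bot"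
    by (rule Lim_null_comparison[OF always_eventually[OF allI[OF bound]]
          tendsto_mult_right_zero[OF lim(2)]])
qed

lemma lborel_integral_derivative_eq_0:
  fixes f F :: "real \<Rightarrow> real"
  assumes "\<And>x. (F has_real_derivative f x) (at x)" and "\<And>x. isCont f x"
    and "integrable lborel f" and "(F \<longlongrightarrow> 0) at_top" and "(F \<longlongrightarrow> 0) at_bot"
  shows "integral\<^sup>L lborel f = 0"
proof -
  have UNIV: "einterval (-\<infinity>) \<infinity> = (UNIV :: real set)"
    by (auto simp: einterval_iff)
  have "(LBINT x=-\<infinity>..\<infinity>. f x) = 0 - 0"
    using assms
    by (intro interval_integral_FTC_integrable)
       (auto simp: has_real_derivative_iff_has_vector_derivative[symmetric] UNIV
         set_integrable_def ereal_tendsto_simps1)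
  then show ?thesis
    by (simp add: interval_lebesgue_integral_def UNIV set_lebesgue_integral_def)
qed

lemma lborel_integral_even_part:
  fixes g :: "real \<Rightarrow> real"
  assumes "integrable lborel g"
  shows "integral\<^sup>L lborel g = (\<integral>x. (g x + g (- x)) / 2 \<partial>lborel)"
proof -
  have "integrable lborel (\<lambda>x. g (- x))"
    using lborel_integrable_real_affine[OF assms, of "-1" 0] by simp
  moreover have "(\<integral>x. g (- x) \<partial>lborel) = integral\<^sup>L lborel g"
    using lborel_integral_real_affine[of "-1" g 0] by simp
  ultimately show ?thesis
    using assms by simp
qed

section \<open>An integral formula for G\<close>

lemma exp_bounded_G_integrand: "exp_bounded (G_integrand \<mu>)"
  unfolding G_integrand_eq[abs_def] by (intro exp_bounded_intros)

lemma G_eq_integral_cosh: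
  "G \<mu> b = exp (- (b^2) / 2) *
     (\<integral>x. cosh (b * x) * G_integrand \<mu> x * std_normal_density x \<partial>lborel)"
proof -
  let ?g = "\<lambda>x. exp (b * x) * G_integrand \<mu> x * std_normal_density x"
  have cont: "continuous_on UNIV (G_integrand \<mu>)"
    using exp_bounded_G_integrand unfolding exp_bounded_def by blast
  have "G \<mu> b = (\<integral>x. normal_density b 1 x * G_integrand \<mu> x \<partial>lborel)"
    unfolding G_def using borel_measurable_continuous_onI[OF cont]
    by (subst integral_density) auto
  also have "\<dots> = (\<integral>x. exp (- (b^2) / 2) * ?g x \<partial>lborel)"
    by (simp add: normal_density_shift[of b] mult_ac)
  also have "\<dots> = exp (- (b^2) / 2) * integral\<^sup>L lborel ?g"
    by (rule integral_mult_right_zero)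
  also have "integral\<^sup>L lborel ?g = (\<integral>x. (?g x + ?g (- x)) / 2 \<partial>lborel)"
    by (intro lborel_integral_even_part integrable_exp_bounded_mult_std_normal
        exp_bounded_mult exp_bounded_exp_linear exp_bounded_G_integrand)
  also have "\<dots> = (\<integral>x. cosh (b * x) * G_integrand \<mu> x * std_normal_density x \<partial>lborel)"
    by (simp add: G_integrand_minus std_normal_density_def cosh_def field_simps)
  finally show ?thesis .
qed

definition G_weight :: "real \<Rightarrow> real \<Rightarrow> real" where
  "G_weight t x = (x^2 - 1) * cosh (t * x) + t * x * sinh (t * x)"

lemma exp_bounded_G_weight: "exp_bounded (G_weight t)"
  unfolding G_weight_def[abs_def] by (intro exp_bounded_intros)

lemma has_real_derivative_boundary_term:
  "((\<lambda>x. \<mu> * x * cosh (b * x) * (1 - tanh (\<mu> * x)^2) * std_normal_density x) has_real_derivative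
      (\<mu> * (G_weight b x * (1 - tanh (\<mu> * x)^2)) - 2 * (cosh (b * x) * G_integrand \<mu> x))
        * std_normal_density x) (at x)"
  unfolding G_weight_def G_integrand_eq
  by (rule derivative_eq_intros refl | simp)+ (simp add: algebra_simps power2_eq_square)

lemma integral_cosh_mult_G_integrand:
  "(\<integral>x. cosh (b * x) * G_integrand \<mu> x * std_normal_density x \<partial>lborel)
     = \<mu> / 2 * (\<integral>x. G_weight b x * (1 - tanh (\<mu> * x)^2) * std_normal_density x \<partial>lborel)"
proof -
  let ?f = "\<lambda>x. \<mu> * (G_weight b x * (1 - tanh (\<mu> * x)^2)) - 2 * (cosh (b * x) * G_integrand \<mu> x)"
  have int_weight: "integrable lborel (\<lambda>x. G_weight b x * (1 - tanh (\<mu> * x)^2) * std_normal_density x)"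
    and int_G: "integrable lborel (\<lambda>x. cosh (b * x) * G_integrand \<mu> x * std_normal_density x)"
    by (intro integrable_exp_bounded_mult_std_normal exp_bounded_intros exp_bounded_G_weight
        exp_bounded_G_integrand)+
  have bounded: "exp_bounded ?f"
    by (intro exp_bounded_intros exp_bounded_G_weight exp_bounded_G_integrand)
  have "(\<integral>x. ?f x * std_normal_density x \<partial>lborel) = 0"
  proof (rule lborel_integral_derivative_eq_0[OF has_real_derivative_boundary_term])
    show "isCont (\<lambda>x. ?f x * std_normal_density x) x" for x
      using bounded unfolding exp_bounded_def
      by (auto intro!: continuous_intros simp: continuous_on_eq_continuous_at std_normal_density_def)
    show "integrable lborel (\<lambda>x. ?f x * std_normal_density x)"
      using bounded by (rule integrable_exp_bounded_mult_std_normal)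
    have "exp_bounded (\<lambda>x. \<mu> * x * cosh (b * x) * (1 - tanh (\<mu> * x)^2))"
      by (intro exp_bounded_intros)
    then show "((\<lambda>x. \<mu> * x * cosh (b * x) * (1 - tanh (\<mu> * x)^2) * std_normal_density x)
        \<longlongrightarrow> 0) at_top"
      "((\<lambda>x. \<mu> * x * cosh (b * x) * (1 - tanh (\<mu> * x)^2) * std_normal_density x)
        \<longlongrightarrow> 0) at_bot"
      by (rule tendsto_exp_bounded_mult_std_normal)+
  qed
  moreover have "(\<integral>x. ?f x * std_normal_density x \<partial>lborel)
      = \<mu> * (\<integral>x. G_weight b x * (1 - tanh (\<mu> * x)^2) * std_normal_density x \<partial>lborel)
        - 2 * (\<integral>x. cosh (b * x) * G_integrand \<mu> x * std_normal_density x \<partial>lborel)"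
    using int_weight int_G by (simp add: left_diff_distrib mult.assoc)
  ultimately show ?thesis
    by simp
qed

lemma cosh_mult_G_integrand:
  "cosh (\<mu> * x) * G_integrand \<mu> x = \<mu> * (G_weight \<mu> x * (1 - tanh (\<mu> * x)^2))"
  unfolding G_integrand_eq G_weight_def tanh_def by (simp add: field_simps)

lemma G_eq_integral_G_weight_diff:
  "G \<mu> b = \<mu> / 2 * exp (- (b^2) / 2) *
     (\<integral>x. (G_weight b x - G_weight \<mu> x) * (1 - tanh (\<mu> * x)^2) * std_normal_density x \<partial>lborel)"
proof -
  define J where "J t = (\<integral>x. G_weight t x * (1 - tanh (\<mu> * x)^2) * std_normal_density x \<partial>lborel)" for t
  have int: "integrable lborel (\<lambda>x. G_weight t x * (1 - tanh (\<mu> * x)^2) * std_normal_density x)" for t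
    by (intro integrable_exp_bounded_mult_std_normal exp_bounded_intros exp_bounded_G_weight)
  have "\<mu> * J \<mu> = (\<integral>x. cosh (\<mu> * x) * G_integrand \<mu> x * std_normal_density x \<partial>lborel)"
    by (simp add: J_def cosh_mult_G_integrand mult.assoc)
  also have "\<dots> = \<mu> / 2 * J \<mu>"
    unfolding J_def by (rule integral_cosh_mult_G_integrand)
  finally have diagonal: "\<mu> / 2 * J \<mu> = 0"
    by simp
  have "G \<mu> b = exp (- (b^2) / 2) * (\<mu> / 2 * J b) - exp (- (b^2) / 2) * (\<mu> / 2 * J \<mu>)"
    using diagonal unfolding G_eq_integral_cosh integral_cosh_mult_G_integrand J_def by simp
  also have "\<dots> = \<mu> / 2 * exp (- (b^2) / 2) * (J b - J \<mu>)"
    by (simp add: algebra_simps)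
  also have "J b - J \<mu>
      = (\<integral>x. (G_weight b x - G_weight \<mu> x) * (1 - tanh (\<mu> * x)^2) * std_normal_density x \<partial>lborel)"
    unfolding J_def using int[of b] int[of \<mu>] by (simp add: left_diff_distrib)
  finally show ?thesis .
qed

lemma abs_sinh_le_cosh: "\<bar>sinh y\<bar> \<le> cosh (y::real)"
  by (cases "0 \<le> y") (auto simp: sinh_le_cosh_real cosh_def sinh_def)

lemma has_real_derivative_G_weight_param:
  "((\<lambda>t. G_weight t x) has_real_derivative x^2 * (x * sinh (t * x) + t * cosh (t * x))) (at t)"
  unfolding G_weight_def
  by (rule derivative_eq_intros refl | simp)+ (simp add: algebra_simps power2_eq_square)

lemma cosh_le_cosh_abs_mono: "\<bar>y\<bar> \<le> \<bar>z\<bar> \<Longrightarrow> cosh y \<le> cosh (z::real)"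
  by (metis abs_ge_zero cosh_real_abs cosh_real_nonneg_le_iff)

lemma G_weight_param_derivative_bounds:
  fixes t s x :: real
  assumes "0 \<le> t" and "t \<le> s"
  shows "0 \<le> x * sinh (t * x) + t * cosh (t * x)"
    and "x * sinh (t * x) + t * cosh (t * x) \<le> (\<bar>x\<bar> + s) * cosh (s * x)"
proof -
  have "0 \<le> x * sinh (t * x)"
  proof (cases "0 \<le> x")
    case True
    then have "0 \<le> sinh (t * x)"
      using assms(1) by simp
    with True show ?thesis
      by simp
  next
    case False
    then have "sinh (t * x) \<le> 0"
      using assms(1) by (simp add: mult_nonneg_nonpos)
    with False show ?thesis
      by (simp add: mult_nonpos_nonpos)
  qed
  then show "0 \<le> x * sinh (t * x) + t * cosh (t * x)"
    using assms(1) by simp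
  have cosh_le: "cosh (t * x) \<le> cosh (s * x)"
    using assms by (intro cosh_le_cosh_abs_mono) (simp add: abs_mult mult_right_mono)
  have "x * sinh (t * x) \<le> \<bar>x\<bar> * cosh (t * x)"
    using abs_ge_self[of "x * sinh (t * x)"]
      mult_left_mono[OF abs_sinh_le_cosh[of "t * x"], of "\<bar>x\<bar>"]
    by (simp add: abs_mult)
  also have "\<dots> \<le> \<bar>x\<bar> * cosh (s * x)"
    using cosh_le by (simp add: mult_left_mono)
  finally show "x * sinh (t * x) + t * cosh (t * x) \<le> (\<bar>x\<bar> + s) * cosh (s * x)"
    using mult_mono[OF assms(2) cosh_le] assms by (simp add: distrib_right)
qed

lemma G_weight_increment_bounds:
  fixes s t x :: real
  assumes "0 \<le> s" and "s \<le> t"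
  shows "0 \<le> G_weight t x - G_weight s x"
    and "G_weight t x - G_weight s x \<le> (t - s) * (x^2 * ((\<bar>x\<bar> + t) * cosh (t * x)))"
proof -
  have "\<exists>z. s \<le> z \<and> z \<le> t \<and>
      G_weight t x - G_weight s x = (t - s) * (x^2 * (x * sinh (z * x) + z * cosh (z * x)))"
  proof (cases "s = t")
    case False
    with assms(2) have "s < t"
      by simp
    then show ?thesis
      using MVT2[OF _ has_real_derivative_G_weight_param] by (metis less_imp_le)
  qed auto
  then obtain z where z: "s \<le> z" "z \<le> t"
    and eq: "G_weight t x - G_weight s x = (t - s) * (x^2 * (x * sinh (z * x) + z * cosh (z * x)))"
    by blast
  note bounds = G_weight_param_derivative_bounds[of z t x]
  show "0 \<le> G_weight t x - G_weight s x"
    unfolding eq using assms z bounds by simp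
  show "G_weight t x - G_weight s x \<le> (t - s) * (x^2 * ((\<bar>x\<bar> + t) * cosh (t * x)))"
    unfolding eq using assms z bounds by (intro mult_left_mono) auto
qed

lemma G_nonpos:
  assumes "0 \<le> b" and "b \<le> \<mu>"
  shows "G \<mu> b \<le> 0"
proof -
  let ?h = "\<lambda>x. (G_weight \<mu> x - G_weight b x) * (1 - tanh (\<mu> * x)^2) * std_normal_density x"
  have "0 \<le> integral\<^sup>L lborel ?h"
    using G_weight_increment_bounds(1)[OF assms]
    by (intro Bochner_Integration.integral_nonneg) (simp add: one_minus_tanh_square_real)
  also have "integral\<^sup>L lborel ?h
      = - (\<integral>x. (G_weight b x - G_weight \<mu> x) * (1 - tanh (\<mu> * x)^2) * std_normal_density x \<partial>lborel)"
    by (simp flip: integral_minus add: algebra_simps)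
  finally show ?thesis
    using assms unfolding G_eq_integral_G_weight_diff by (simp add: mult_nonneg_nonpos)
qed

lemma cosh_le_exp_abs: "cosh (y::real) \<le> exp \<bar>y\<bar>"
  by (cases "0 \<le> y") (auto simp: cosh_def)

lemma exp_abs_le_two_cosh: "exp \<bar>y\<bar> \<le> 2 * cosh (y::real)"
  by (cases "0 \<le> y") (auto simp: cosh_def)

lemma one_minus_tanh_square_le_exp: "1 - tanh (y::real) ^ 2 \<le> 4 * exp (- 2 * \<bar>y\<bar>)"
proof -
  have "exp (2 * \<bar>y\<bar>) = exp \<bar>y\<bar> ^ 2"
    by (simp flip: exp_of_nat_mult)
  also have "\<dots> \<le> (2 * cosh y) ^ 2"
    by (rule power_mono[OF exp_abs_le_two_cosh]) simp
  finally have "exp (2 * \<bar>y\<bar>) \<le> 4 * cosh y ^ 2"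
    by simp
  then show ?thesis
    unfolding one_minus_tanh_square_real exp_minus mult_minus_left
    by (simp add: field_simps)
qed

lemma square_mult_le_exp:
  fixes x t :: real
  assumes "0 \<le> t"
  shows "x^2 * (\<bar>x\<bar> + t) \<le> 2 * (1 + t) * exp (2 * \<bar>x\<bar>)"
proof -
  have "x^2 \<le> 2 * exp \<bar>x\<bar>"
    using exp_lower_Taylor_quadratic[of "\<bar>x\<bar>"] by simp
  moreover have "\<bar>x\<bar> + t \<le> (1 + t) * exp \<bar>x\<bar>"
    using exp_ge_add_one_self[of "\<bar>x\<bar>"] mult_left_mono[OF one_le_exp_iff[THEN iffD2] assms, of "\<bar>x\<bar>"]
    unfolding distrib_right by linarith
  ultimately have "x^2 * (\<bar>x\<bar> + t) \<le> 2 * exp \<bar>x\<bar> * ((1 + t) * exp \<bar>x\<bar>)"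
    using assms by (intro mult_mono) auto
  also have "\<dots> = 2 * (1 + t) * exp (2 * \<bar>x\<bar>)"
    by (simp add: mult_ac flip: exp_add)
  finally show ?thesis .
qed

lemma G_weight_increment_mult_sech_square_le:
  fixes \<mu> b x :: real
  assumes "0 \<le> \<mu>" and "\<mu> \<le> b"
  shows "(G_weight b x - G_weight \<mu> x) * (1 - tanh (\<mu> * x)^2)
    \<le> 8 * (1 + b) * (b - \<mu>) * exp ((b - 2 * \<mu> + 2) * \<bar>x\<bar>)"
proof -
  have "x^2 * ((\<bar>x\<bar> + b) * cosh (b * x)) = x^2 * (\<bar>x\<bar> + b) * cosh (b * x)"
    by (simp add: mult.assoc)
  also have "\<dots> \<le> 2 * (1 + b) * exp (2 * \<bar>x\<bar>) * exp (b * \<bar>x\<bar>)"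
    using assms cosh_le_exp_abs[of "b * x"]
    by (intro mult_mono square_mult_le_exp) (auto simp: abs_mult)
  finally have "G_weight b x - G_weight \<mu> x
      \<le> (b - \<mu>) * (2 * (1 + b) * exp (2 * \<bar>x\<bar>) * exp (b * \<bar>x\<bar>))"
    using G_weight_increment_bounds(2)[OF assms, of x] mult_left_mono[of _ _ "b - \<mu>"] assms
    by (meson diff_ge_0_iff_ge order.trans)
  moreover have "1 - tanh (\<mu> * x)^2 \<le> 4 * exp (- 2 * \<mu> * \<bar>x\<bar>)"
    using one_minus_tanh_square_le_exp[of "\<mu> * x"] assms by (simp add: abs_mult mult.assoc)
  ultimately have "(G_weight b x - G_weight \<mu> x) * (1 - tanh (\<mu> * x)^2)
      \<le> (b - \<mu>) * (2 * (1 + b) * exp (2 * \<bar>x\<bar>) * exp (b * \<bar>x\<bar>)) * (4 * exp (- 2 * \<mu> * \<bar>x\<bar>))"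
    using assms by (intro mult_mono) (auto simp: one_minus_tanh_square_real)
  also have "\<dots> = 8 * (1 + b) * (b - \<mu>) * exp ((b - 2 * \<mu> + 2) * \<bar>x\<bar>)"
    by (simp add: algebra_simps flip: exp_add)
  finally show ?thesis .
qed

lemma G_le_exp_decay:
  assumes "0 \<le> \<mu>" and "\<mu> \<le> b"
  shows "G \<mu> b \<le> 8 * \<mu> * ((1 + b) * exp (- 2 * (\<mu> - 1) * (b - \<mu> + 1))) * (b - \<mu>)"
proof -
  define k where "k = b - 2 * \<mu> + 2"
  let ?h = "\<lambda>x. (G_weight b x - G_weight \<mu> x) * (1 - tanh (\<mu> * x)^2) * std_normal_density x"
  let ?C = "8 * (1 + b) * (b - \<mu>)"
  have "integral\<^sup>L lborel ?h \<le> (\<integral>x. ?C * (exp (k * \<bar>x\<bar>) * std_normal_density x) \<partial>lborel)"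
  proof (rule integral_mono)
    show "integrable lborel ?h"
      by (intro integrable_exp_bounded_mult_std_normal exp_bounded_intros exp_bounded_G_weight)
    show "integrable lborel (\<lambda>x. ?C * (exp (k * \<bar>x\<bar>) * std_normal_density x))"
      by (intro integrable_mult_right integrable_exp_bounded_mult_std_normal exp_bounded_exp_abs)
    show "?h x \<le> ?C * (exp (k * \<bar>x\<bar>) * std_normal_density x)" for x
      using mult_right_mono[OF G_weight_increment_mult_sech_square_le[OF assms] normal_density_nonneg]
      by (simp add: k_def mult.assoc)
  qed
  also have "\<dots> = ?C * (\<integral>x. exp (k * \<bar>x\<bar>) * std_normal_density x \<partial>lborel)"
    by (rule integral_mult_right_zero)
  also have "\<dots> \<le> ?C * (2 * exp (k^2 / 2))"
    using assms by (intro mult_left_mono integral_exp_abs_mult_std_normal_le) auto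
  finally have integral_le: "integral\<^sup>L lborel ?h \<le> ?C * (2 * exp (k^2 / 2))" .
  have "- (b^2) / 2 + k^2 / 2 = - 2 * (\<mu> - 1) * (b - \<mu> + 1)"
    unfolding k_def by (simp add: power2_eq_square field_simps)
  then have exponent: "exp (- (b^2) / 2) * exp (k^2 / 2) = exp (- 2 * (\<mu> - 1) * (b - \<mu> + 1))"
    by (simp only: exp_add[symmetric])
  have "G \<mu> b \<le> \<mu> / 2 * exp (- (b^2) / 2) * (?C * (2 * exp (k^2 / 2)))"
    unfolding G_eq_integral_G_weight_diff using assms by (intro mult_left_mono[OF integral_le]) auto
  also have "\<dots> = 8 * \<mu> * ((1 + b) * (exp (- (b^2) / 2) * exp (k^2 / 2))) * (b - \<mu>)"
    by (simp add: algebra_simps)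
  finally show ?thesis
    unfolding exponent .
qed

lemma exp_decay_factor_le:
  fixes \<mu> b :: real
  assumes "3/2 \<le> \<mu>" and "\<mu> \<le> b"
  shows "(1 + b) * exp (- 2 * (\<mu> - 1) * (b - \<mu> + 1)) \<le> (1 + \<mu>) * exp (2 - 2 * \<mu>)"
proof -
  define d where "d = b - \<mu>"
  have "0 \<le> d"
    using assms by (simp add: d_def)
  have "1 + b \<le> (1 + \<mu>) * (1 + d)"
    using assms \<open>0 \<le> d\<close> by (simp add: d_def algebra_simps)
  also have "\<dots> \<le> (1 + \<mu>) * exp d"
    using assms by (intro mult_left_mono) auto
  finally have linear: "1 + b \<le> (1 + \<mu>) * exp d" .
  have "d \<le> 2 * (\<mu> - 1) * d"
    using assms \<open>0 \<le> d\<close> mult_right_mono[of 1 "2 * (\<mu> - 1)" d] by simp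
  then have "exp (- 2 * (\<mu> - 1) * (b - \<mu> + 1)) \<le> exp (2 - 2 * \<mu> + - d)"
    by (simp add: d_def algebra_simps)
  also have "\<dots> = exp (2 - 2 * \<mu>) * exp (- d)"
    by (rule exp_add)
  finally have decay: "exp (- 2 * (\<mu> - 1) * (b - \<mu> + 1)) \<le> exp (2 - 2 * \<mu>) * exp (- d)" .
  have "(1 + b) * exp (- 2 * (\<mu> - 1) * (b - \<mu> + 1))
      \<le> ((1 + \<mu>) * exp d) * (exp (2 - 2 * \<mu>) * exp (- d))"
    using assms by (intro mult_mono linear decay) auto
  also have "\<dots> = (1 + \<mu>) * exp (2 - 2 * \<mu>)"
    by (simp add: exp_minus field_simps)
  finally show ?thesis .
qed

theorem lemmaC8:
  shows "\<exists>c::real > 0. \<forall>\<mu> \<mu>s :: real. \<mu> > 0 \<longrightarrow> \<mu>s > 0 \<longrightarrow> c \<le> \<mu> \<longrightarrow> \<mu> \<le> 4/3 * \<mu>s \<longrightarrow>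
            G \<mu> \<mu>s \<le> 0.01 * \<bar>\<mu> - \<mu>s\<bar>"
proof -
  have "\<forall>\<^sub>F \<mu> in at_top. 8 * \<mu> * ((1 + \<mu>) * exp (2 - 2 * \<mu>)) \<le> (1 / 100 :: real)"
    by real_asymp
  then obtain c :: real where c: "\<And>\<mu>. c \<le> \<mu> \<Longrightarrow> 8 * \<mu> * ((1 + \<mu>) * exp (2 - 2 * \<mu>)) \<le> 1 / 100"
    unfolding eventually_at_top_linorder by blast
  show ?thesis
  proof (intro exI[of _ "max c (3/2)"] conjI allI impI)
    fix \<mu> \<mu>s :: real
    assume "\<mu>s > 0" and \<mu>: "max c (3/2) \<le> \<mu>"
    show "G \<mu> \<mu>s \<le> 0.01 * \<bar>\<mu> - \<mu>s\<bar>"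
    proof (cases "\<mu>s \<le> \<mu>")
      case True
      then show ?thesis
        using G_nonpos[of \<mu>s \<mu>] \<open>\<mu>s > 0\<close> by simp
    next
      case False
      have "G \<mu> \<mu>s \<le> 8 * \<mu> * ((1 + \<mu>s) * exp (- 2 * (\<mu> - 1) * (\<mu>s - \<mu> + 1))) * (\<mu>s - \<mu>)"
        using \<mu> False by (intro G_le_exp_decay) auto
      also have "\<dots> \<le> 8 * \<mu> * ((1 + \<mu>) * exp (2 - 2 * \<mu>)) * (\<mu>s - \<mu>)"
        using \<mu> False by (intro mult_right_mono mult_left_mono exp_decay_factor_le) auto
      also have "\<dots> \<le> 1 / 100 * (\<mu>s - \<mu>)"
        using \<mu> False by (intro mult_right_mono c) auto
      finally show ?thesis
        using False by simp
    qed
  qed simp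
qed

end
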